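(* Let $A\in\mathbb{R}^{n\times n}$ and $B\in\mathbb{R}^{m\times m}$, and define $C:=\operatorname{diag}(A,B)\in\mathbb{R}^{(n+m)\times(n+m)}$. Pick $k\in\{1,\dots,n+m\}$, let $r:=\binom{n+m}{k}$, $i_1:=\max\{0,k-n\}$ and $i_2:=\min\{m,k\}$. Then there exists a permutation matrix $P\in\mathbb{R}^{r\times r}$ such that \[ C^{(k)}=P\left(\operatorname{diag}_{i\in\{i_1,\dots,i_2\}}\big(A^{(k-i)}\otimes B^{(i)}\big)\right)P^{-1} \] and \[ C^{[k]}=P\left(\operatorname{diag}_{i\in\{i_1,\dots,i_2\}}\big(A^{[k-i]}\oplus B^{[i]}\big)\right)P^{-1}. \]
   Context: For $M\in\mathbb{R}^{p\times q}$ and $k\le\min\{p,q\}$, the $k$th multiplicative compound $M^{(k)}$ is the $\binom{p}{k}\times\binom{q}{k}$ matrix of all $k\times k$ minors of $M$, rows and columns indexed by increasing $k$-tuples of indices in lexicographic order. For square $M$, the $k$th additive compound is $M^{[k]}:=\frac{d}{dt}(\exp(Mt))^{(k)}\big|_{t=0}$. For square $M$, $M^{(0)}:=1$ and $M^{[0]}:=0$ (as $1\times1$ matrices). $\otimes$ is the Kronecker product, and the Kronecker sum of $X\in\mathbb{R}^{a\times a}$, $Y\in\mathbb{R}^{b\times b}$ is $X\oplus Y:=X\otimes I_b+I_a\otimes Y$. $\operatorname{diag}_{i\in\{i_1,\dots,i_2\}}(M_i)$ denotes the block-diagonal matrix with diagonal blocks $M_{i_1},M_{i_1+1},\dots,M_{i_2}$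 in this order. *)

theory Defs
  imports "HOL-Analysis.Derivative" "Jordan_Normal_Form.Matrix" "Jordan_Normal_Form.Determinant"
begin

fun inc_tuples :: "nat \<Rightarrow> 'a list \<Rightarrow> 'a list list" where
  "inc_tuples 0 xs = [[]]"
| "inc_tuples (Suc k) [] = []"
| "inc_tuples (Suc k) (x # xs) = map ((#) x) (inc_tuples k xs) @ inc_tuples (Suc k) xs"

definition mult_compound :: "nat \<Rightarrow> real mat \<Rightarrow> real mat" where
  "mult_compound k M =
     (let I = inc_tuples k [0..<dim_row M]; J = inc_tuples k [0..<dim_col M]
      in mat (length I) (length J)
           (\<lambda>(i, j). det (mat k k (\<lambda>(a, b). M $$ (I ! i ! a, J ! j ! b)))))"

definition mat_exp :: "real \<Rightarrow> real mat \<Rightarrow> real mat" where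
  "mat_exp t M = mat (dim_row M) (dim_col M)
     (\<lambda>(i, j). \<Sum>l. (t ^ l / fact l) * (M ^\<^sub>m l) $$ (i, j))"

definition add_compound :: "nat \<Rightarrow> real mat \<Rightarrow> real mat" where
  "add_compound k M =
     (let r = dim_row (mult_compound k M)
      in mat r r (\<lambda>(i, j). deriv (\<lambda>t. mult_compound k (mat_exp t M) $$ (i, j)) 0))"

definition kron :: "real mat \<Rightarrow> real mat \<Rightarrow> real mat" where
  "kron X Y = mat (dim_row X * dim_row Y) (dim_col X * dim_col Y)
     (\<lambda>(i, j). X $$ (i div dim_row Y, j div dim_col Y) * Y $$ (i mod dim_row Y, j mod dim_col Y))"

definition kron_sum :: "real mat \<Rightarrow> real mat \<Rightarrow> real mat" where
  "kron_sum X Y = kron X (1\<^sub>m (dim_row Y)) + kron (1\<^sub>m (dim_row X)) Y"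

definition perm_mat :: "nat \<Rightarrow> real mat \<Rightarrow> bool" where
  "perm_mat r P \<longleftrightarrow> (\<exists>\<sigma>. \<sigma> permutes {..<r} \<and> P = mat r r (\<lambda>(i, j). if i = \<sigma> j then 1 else 0))"

end

theory Submission
  imports Defs
begin

text \<open>
  Split a \<open>k\<close>-subset of the indices of \<open>C = diag(A, B)\<close> into its \<open>k - i\<close> indices in the
  \<open>A\<close>-block and its \<open>i\<close> indices in the \<open>B\<close>-block. The minor of \<open>C\<close> with rows \<open>I\<close>
  and columns \<open>J\<close> vanishes unless \<open>I\<close> and \<open>J\<close> split with the same \<open>i\<close> (a zero
  off-diagonal block of the wrong shape), and otherwise it is the product of an \<open>A\<close>-minor
  and a \<open>B\<close>-minor. Listing the \<open>k\<close>-subsets by increasing \<open>i\<close> and, within a block,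
  lexicographically by the pair (\<open>A\<close>-part, \<open>B\<close>-part), which is the row order of
  \<open>A^(k-i) \<otimes> B^(i)\<close>, therefore turns \<open>C^(k)\<close> into the block-diagonal
  matrix of the theorem; \<open>P\<close> is the permutation matrix comparing this order with the
  lexicographic one.

  Since \<open>exp(Ct) = diag(exp(At), exp(Bt))\<close>, the same reordering works for
  \<open>exp(Ct)^(k)\<close>. Differentiating its entries at \<open>t = 0\<close> with the product rule, and
  using that the compounds of \<open>exp(0) = I\<close> are identities, turns each Kronecker product of
  multiplicative compounds into the Kronecker sum of the additive ones.
\<close>

lemma length_inc_tuples: "length (inc_tuples k xs) = length xs choose k"
  by (induction k xs rule: inc_tuples.induct) auto

lemma set_inc_tuples:
  fixes xs :: "'a::linorder list"
  assumes "sorted_wrt (<) xs"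
  shows "set (inc_tuples k xs) = {ys. sorted_wrt (<) ys \<and> length ys = k \<and> set ys \<subseteq> set xs}"
  using assms
proof (induction k xs rule: inc_tuples.induct)
  case (3 k x xs)
  have sx: "sorted_wrt (<) xs" and lt: "\<forall>y\<in>set xs. x < y" using "3.prems" by auto
  show ?case
  proof (intro Set.set_eqI iffI)
    fix ys assume "ys \<in> set (inc_tuples (Suc k) (x # xs))"
    then show "ys \<in> {ys. sorted_wrt (<) ys \<and> length ys = Suc k \<and> set ys \<subseteq> set (x # xs)}"
      using "3.IH"[OF sx] lt by fastforce
  next
    fix ys assume ys: "ys \<in> {ys. sorted_wrt (<) ys \<and> length ys = Suc k \<and> set ys \<subseteq> set (x # xs)}"
    then obtain y ys' where ys_eq: "ys = y # ys'" by (cases ys) auto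
    show "ys \<in> set (inc_tuples (Suc k) (x # xs))"
    proof (cases "y = x")
      case True
      then have "set ys' \<subseteq> set xs" using ys ys_eq by auto
      then show ?thesis using "3.IH"(1)[OF sx] ys ys_eq True by auto
    next
      case False
      then have "y \<in> set xs" using ys ys_eq by auto
      then have "set ys \<subseteq> set xs" using ys ys_eq lt by (fastforce intro: less_trans)
      then show ?thesis using "3.IH"(2)[OF sx] ys by auto
    qed
  qed
qed auto

lemma mem_inc_tuples_upt:
  "ys \<in> set (inc_tuples k [0..<N]) \<longleftrightarrow> sorted_wrt (<) ys \<and> length ys = k \<and> set ys \<subseteq> {..<N}"
  by (subst set_inc_tuples) auto

lemma nth_inc_tuples_upt:
  assumes "x < N choose k"
  shows "sorted_wrt (<) (inc_tuples k [0..<N] ! x)" "length (inc_tuples k [0..<N] ! x) = k"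
    "set (inc_tuples k [0..<N] ! x) \<subseteq> {..<N}"
  using nth_mem[of x "inc_tuples k [0..<N]"] assms
  by (simp_all add: length_inc_tuples mem_inc_tuples_upt)

lemma distinct_inc_tuples:
  fixes xs :: "'a::linorder list"
  assumes "sorted_wrt (<) xs"
  shows "distinct (inc_tuples k xs)"
  using assms
proof (induction k xs rule: inc_tuples.induct)
  case (3 k x xs)
  have sx: "sorted_wrt (<) xs" and lt: "\<forall>y\<in>set xs. x < y" using "3.prems" by auto
  have "x # ys \<notin> set (inc_tuples (Suc k) xs)" for ys
    using set_inc_tuples[OF sx] lt by auto
  then show ?case using "3.IH"[OF sx] by (auto simp: distinct_map)
qed auto

lemma length_concat_map_map: "length (concat (map (\<lambda>a. map (g a) ys) xs)) = length xs * length ys"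
  by (induction xs) auto

lemma nth_concat_map_map:
  assumes "p < length xs * length ys"
  shows "concat (map (\<lambda>a. map (g a) ys) xs) ! p = g (xs ! (p div length ys)) (ys ! (p mod length ys))"
  using assms
proof (induction xs arbitrary: p)
  case (Cons x xs)
  show ?case
  proof (cases "p < length ys")
    case False
    then have "p - length ys < length xs * length ys" "0 < length ys" using Cons.prems by auto
    with False show ?thesis by (simp add: Cons.IH nth_append le_div_geq le_mod_geq)
  qed (simp add: nth_append)
qed auto

lemma nth_concat_map_obtain:
  assumes "p < length (concat (map L ks))"
  obtains j y where "j \<in> set ks" "y < length (L j)" "concat (map L ks) ! p = L j ! y"
proof -
  have "concat (map L ks) ! p \<in> set (concat (map L ks))" using assms by (rule nth_mem)
  then obtain j where "j \<in> set ks" "concat (map L ks) ! p \<in> set (L j)"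
    unfolding set_concat set_map by blast
  then show ?thesis using that by (metis in_set_conv_nth)
qed

lemma distinct_concat_map:
  assumes "distinct xs" "\<And>x. x \<in> set xs \<Longrightarrow> distinct (F x)"
    and "\<And>x y. x \<in> set xs \<Longrightarrow> y \<in> set xs \<Longrightarrow> x \<noteq> y \<Longrightarrow> set (F x) \<inter> set (F y) = {}"
  shows "distinct (concat (map F xs))"
  using assms
proof (induction xs)
  case (Cons x xs)
  have "set (F x) \<inter> set (concat (map F xs)) = {}" using Cons.prems(1,3) by fastforce
  then show ?case using Cons by simp
qed simp

lemma filter_less_append_filter_not_less:
  fixes ys :: "'a::linorder list"
  assumes "sorted ys"
  shows "filter (\<lambda>y. y < c) ys @ filter (\<lambda>y. \<not> y < c) ys = ys"
  using assms
proof (induction ys)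
  case (Cons y ys)
  show ?case
  proof (cases "y < c")
    case False
    then have "\<forall>z\<in>set ys. \<not> z < c" using Cons.prems by (auto dest: order.trans)
    then show ?thesis using False by (simp add: filter_id_conv)
  qed (use Cons in auto)
qed auto

section \<open>Minors and multiplicative compounds\<close>

definition submat :: "'a mat \<Rightarrow> nat list \<Rightarrow> nat list \<Rightarrow> 'a mat" where
  "submat M I J = mat (length I) (length J) (\<lambda>(u, v). M $$ (I ! u, J ! v))"

lemma dim_submat [simp]: "dim_row (submat M I J) = length I" "dim_col (submat M I J) = length J"
  by (simp_all add: submat_def)

lemma submat_carrier [simp]: "submat M I J \<in> carrier_mat (length I) (length J)"
  by (simp add: carrier_matI)

lemma mult_compound_carrier: "mult_compound k M \<in> carrier_mat (dim_row M choose k) (dim_col M choose k)"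
  by (simp add: mult_compound_def Let_def length_inc_tuples)

lemma mult_compound_carrier_square:
  "M \<in> carrier_mat n n \<Longrightarrow> mult_compound k M \<in> carrier_mat (n choose k) (n choose k)"
  using mult_compound_carrier[of k M] by simp

lemma index_mult_compound:
  assumes "x < dim_row M choose k" "y < dim_col M choose k"
  shows "mult_compound k M $$ (x, y) =
    det (submat M (inc_tuples k [0..<dim_row M] ! x) (inc_tuples k [0..<dim_col M] ! y))"
  using assms nth_inc_tuples_upt(2)[OF assms(1)] nth_inc_tuples_upt(2)[OF assms(2)]
  by (simp add: mult_compound_def Let_def length_inc_tuples submat_def)

lemma det_eq_0_if_rows_in_few_columns:
  fixes M :: "'a::comm_ring_1 mat"
  assumes M: "M \<in> carrier_mat k k" and R: "R \<subseteq> {..<k}" and C: "finite C" "card C < card R"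
    and zero: "\<And>u v. u \<in> R \<Longrightarrow> v < k \<Longrightarrow> v \<notin> C \<Longrightarrow> M $$ (u, v) = 0"
  shows "det M = 0"
proof -
  have "(\<Prod>u = 0..<k. M $$ (u, p u)) = 0" if p: "p permutes {0..<k}" for p
  proof -
    have "\<not> p ` R \<subseteq> C"
    proof
      assume "p ` R \<subseteq> C"
      then have "card (p ` R) \<le> card C" using C by (simp add: card_mono)
      moreover have "card (p ` R) = card R"
        using permutes_inj[OF p] by (simp add: card_image inj_on_subset)
      ultimately show False using C by simp
    qed
    then obtain u where u: "u \<in> R" "p u \<notin> C" by blast
    moreover have "p u < k" using permutes_in_image[OF p] u R by auto
    ultimately have "M $$ (u, p u) = 0" using zero by blast
    then show ?thesis using u R by (intro prod_zero) (auto intro!: bexI[of _ u])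
  qed
  then show ?thesis unfolding det_def'[OF M] by simp
qed

lemma det_four_block_mat_nonsquare_diag:
  fixes P Q :: "'a::comm_ring_1 mat"
  assumes P: "P \<in> carrier_mat p p'" and Q: "Q \<in> carrier_mat q q'"
    and sq: "p + q = p' + q'" and ne: "p \<noteq> p'"
  shows "det (four_block_mat P (0\<^sub>m p q') (0\<^sub>m q p') Q) = 0"
proof -
  let ?M = "four_block_mat P (0\<^sub>m p q') (0\<^sub>m q p') Q"
  have M: "?M \<in> carrier_mat (p + q) (p + q)" using P Q sq by (metis four_block_carrier_mat)
  show ?thesis
  proof (cases "p' < p")
    case True
    show ?thesis
      by (rule det_eq_0_if_rows_in_few_columns[OF M, of "{..<p}" "{..<p'}"])
        (use True P Q sq in auto)
  next
    case False
    show ?thesis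
      by (rule det_eq_0_if_rows_in_few_columns[OF M, of "{p..<p + q}" "{p'..<p + q}"])
        (use False ne P Q sq in auto)
  qed
qed

context
  fixes A B :: "'a::idom mat" and n m :: nat
  assumes A: "A \<in> carrier_mat n n" and B: "B \<in> carrier_mat m m"
begin

lemma submat_four_block_diag:
  assumes a: "set a \<subseteq> {..<n}" "set a' \<subseteq> {..<n}" and b: "set b \<subseteq> {..<m}" "set b' \<subseteq> {..<m}"
  shows "submat (four_block_mat A (0\<^sub>m n m) (0\<^sub>m m n) B) (a @ map ((+) n) b) (a' @ map ((+) n) b') =
    four_block_mat (submat A a a') (0\<^sub>m (length a) (length b')) (0\<^sub>m (length b) (length a'))
      (submat B b b')"
proof (rule eq_matI)
  fix u v
  assume "u < dim_row (four_block_mat (submat A a a') (0\<^sub>m (length a) (length b'))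
      (0\<^sub>m (length b) (length a')) (submat B b b'))"
    and "v < dim_col (four_block_mat (submat A a a') (0\<^sub>m (length a) (length b'))
      (0\<^sub>m (length b) (length a')) (submat B b b'))"
  then have uv: "u < length a + length b" "v < length a' + length b'" by auto
  have "a ! u < n" if "u < length a" using a that by (auto dest: nth_mem)
  moreover have "a' ! v < n" if "v < length a'" using a that by (auto dest: nth_mem)
  moreover have "b ! (u - length a) < m" if "\<not> u < length a"
  proof -
    have "b ! (u - length a) \<in> set b" using that uv by (intro nth_mem) linarith
    then show ?thesis using b by auto
  qed
  moreover have "b' ! (v - length a') < m" if "\<not> v < length a'"
  proof -
    have "b' ! (v - length a') \<in> set b'" using that uv by (intro nth_mem) linarith
    then show ?thesis using b by auto
  qed
  ultimately show "submat (four_block_mat A (0\<^sub>m n m) (0\<^sub>m m n) B) (a @ map ((+) n) b) (a' @ map ((+) n) b') $$ (u, v) =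
    four_block_mat (submat A a a') (0\<^sub>m (length a) (length b')) (0\<^sub>m (length b) (length a')) (submat B b b') $$ (u, v)"
    using uv A B by (auto simp: submat_def nth_append)
qed (auto simp: submat_def)

lemma det_submat_four_block_diag:
  assumes "set a \<subseteq> {..<n}" "set a' \<subseteq> {..<n}" "set b \<subseteq> {..<m}" "set b' \<subseteq> {..<m}"
    and len: "length a + length b = length a' + length b'"
  shows "det (submat (four_block_mat A (0\<^sub>m n m) (0\<^sub>m m n) B) (a @ map ((+) n) b) (a' @ map ((+) n) b')) =
    (if length a = length a' then det (submat A a a') * det (submat B b b') else 0)"
proof (cases "length a = length a'")
  case True
  moreover have "length b = length b'" using True len by simp
  ultimately have "det (four_block_mat (submat A a a') (0\<^sub>m (length a) (length b'))
      (0\<^sub>m (length b) (length a')) (submat B b b')) = det (submat A a a') * det (submat B b b')"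
    by (intro det_four_block_mat_lower_left_zero) auto
  with True show ?thesis unfolding submat_four_block_diag[OF assms(1-4)] by simp
next
  case False
  then show ?thesis
    unfolding submat_four_block_diag[OF assms(1-4)]
    using len by (simp add: det_four_block_mat_nonsquare_diag)
qed

end

lemma mult_compound_one: "mult_compound k (1\<^sub>m n :: real mat) = 1\<^sub>m (n choose k)"
proof (rule eq_matI)
  fix x y assume "x < dim_row (1\<^sub>m (n choose k))" "y < dim_col (1\<^sub>m (n choose k))"
  then have xy: "x < n choose k" "y < n choose k" by auto
  let ?I = "inc_tuples k [0..<n] ! x" and ?J = "inc_tuples k [0..<n] ! y"
  note I = nth_inc_tuples_upt[OF xy(1)] and J = nth_inc_tuples_upt[OF xy(2)]
  have "det (submat (1\<^sub>m n) ?I ?J) = (if x = y then 1 else (0::real))"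
  proof (cases "x = y")
    case True
    have "submat (1\<^sub>m n) ?I ?J = (1\<^sub>m k :: real mat)"
      using True I by (intro eq_matI) (auto simp: submat_def subset_iff strict_sorted_iff nth_eq_iff_index_eq)
    then show ?thesis using True by simp
  next
    case False
    have "?I \<noteq> ?J"
      using False xy distinct_inc_tuples[of "[0..<n]" k] by (simp add: nth_eq_iff_index_eq length_inc_tuples)
    then have "set ?I \<noteq> set ?J"
      using I J by (auto simp: strict_sorted_iff dest: sorted_distinct_set_unique)
    moreover have "card (set ?I) = card (set ?J)"
      using I J by (simp add: strict_sorted_iff distinct_card)
    ultimately have "\<not> set ?I \<subseteq> set ?J"
      using card_subset_eq by blast
    then obtain z where "z \<in> set ?I" "z \<notin> set ?J" by blast
    then obtain u where u: "u < k" "?I ! u \<notin> set ?J" using I(2) by (metis in_set_conv_nth)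
    have "det (submat (1\<^sub>m n :: real mat) ?I ?J) = 0"
      by (rule det_eq_0_if_rows_in_few_columns[of _ k "{u}" "{}"])
        (use u I(2,3) J in \<open>auto simp: submat_def subset_iff\<close>)
    then show ?thesis using False by simp
  qed
  moreover have "mult_compound k (1\<^sub>m n) $$ (x, y) = det (submat (1\<^sub>m n :: real mat) ?I ?J)"
    using index_mult_compound[of x "1\<^sub>m n" k y] xy by simp
  ultimately show "mult_compound k (1\<^sub>m n) $$ (x, y) = 1\<^sub>m (n choose k) $$ (x, y)"
    using xy by simp
qed (use mult_compound_carrier[of k "1\<^sub>m n"] in auto)

definition perm_matrix :: "nat \<Rightarrow> (nat \<Rightarrow> nat) \<Rightarrow> 'a::semiring_1 mat" where
  "perm_matrix r \<sigma> = mat r r (\<lambda>(i, j). if i = \<sigma> j then 1 else 0)"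

lemma dim_perm_matrix [simp]: "dim_row (perm_matrix r \<sigma>) = r" "dim_col (perm_matrix r \<sigma>) = r"
  by (simp_all add: perm_matrix_def)

lemma perm_matrix_carrier [simp]: "perm_matrix r \<sigma> \<in> carrier_mat r r"
  by (simp add: carrier_matI)

lemma index_perm_matrix_mult:
  assumes \<sigma>: "\<sigma> permutes {..<r}" and D: "D \<in> carrier_mat r c" and ij: "i < r" "j < c"
  shows "(perm_matrix r \<sigma> * D) $$ (i, j) = D $$ (inv_into UNIV \<sigma> i, j)"
proof -
  have iff: "i = \<sigma> l \<longleftrightarrow> l = inv_into UNIV \<sigma> i" for l
    using permutes_inv_eq[OF \<sigma>] by metis
  have "inv_into UNIV \<sigma> i < r" using permutes_in_image[OF permutes_inv[OF \<sigma>]] ij by simp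
  then show ?thesis
    using D ij by (simp add: perm_matrix_def scalar_prod_def atLeast0LessThan iff of_bool_def[symmetric])
qed

lemma index_mult_perm_matrix:
  assumes \<tau>: "\<tau> permutes {..<r}" and D: "D \<in> carrier_mat c r" and ij: "i < c" "j < r"
  shows "(D * perm_matrix r \<tau>) $$ (i, j) = D $$ (i, \<tau> j)"
  using D ij permutes_in_image[OF \<tau>]
  by (simp add: perm_matrix_def scalar_prod_def atLeast0LessThan of_bool_def[symmetric])

lemma perm_matrix_mult:
  assumes \<sigma>: "\<sigma> permutes {..<r}" and \<tau>: "\<tau> permutes {..<r}"
  shows "perm_matrix r \<sigma> * perm_matrix r \<tau> = (perm_matrix r (\<sigma> \<circ> \<tau>) :: 'a::semiring_1 mat)"
proof (rule eq_matI)
  fix i j assume "i < dim_row (perm_matrix r (\<sigma> \<circ> \<tau>) :: 'a mat)" "j < dim_col (perm_matrix r (\<sigma> \<circ> \<tau>) :: 'a mat)"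
  then have ij: "i < r" "j < r" by (simp_all add: perm_matrix_def)
  have "inv_into UNIV \<sigma> i = \<tau> j \<longleftrightarrow> i = \<sigma> (\<tau> j)" using permutes_inv_eq[OF \<sigma>] by auto
  then show "(perm_matrix r \<sigma> * perm_matrix r \<tau>) $$ (i, j) = (perm_matrix r (\<sigma> \<circ> \<tau>) :: 'a mat) $$ (i, j)"
    using ij permutes_in_image[OF permutes_inv[OF \<sigma>]]
    by (subst index_perm_matrix_mult[OF \<sigma>]) (auto simp: perm_matrix_def)
qed (simp_all add: perm_matrix_def)

lemma perm_matrix_id: "perm_matrix r id = 1\<^sub>m r"
  by (auto simp: perm_matrix_def)

lemma perm_matrix_mult_inv:
  assumes \<sigma>: "\<sigma> permutes {..<r}"
  shows "perm_matrix r \<sigma> * perm_matrix r (inv_into UNIV \<sigma>) = 1\<^sub>m r"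
    and "perm_matrix r (inv_into UNIV \<sigma>) * perm_matrix r \<sigma> = 1\<^sub>m r"
  using perm_matrix_mult[OF \<sigma> permutes_inv[OF \<sigma>]] perm_matrix_mult[OF permutes_inv[OF \<sigma>] \<sigma>]
  by (simp_all add: permutes_inv_o[OF \<sigma>] perm_matrix_id)

lemma perm_matrix_conjugate:
  assumes \<sigma>: "\<sigma> permutes {..<r}" and M: "M \<in> carrier_mat r r" and D: "D \<in> carrier_mat r r"
    and MD: "\<And>p q. p < r \<Longrightarrow> q < r \<Longrightarrow> M $$ (\<sigma> p, \<sigma> q) = D $$ (p, q)"
  shows "M = perm_matrix r \<sigma> * D * perm_matrix r (inv_into UNIV \<sigma>)"
proof (rule eq_matI)
  fix i j assume "i < dim_row (perm_matrix r \<sigma> * D * perm_matrix r (inv_into UNIV \<sigma>))"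
    "j < dim_col (perm_matrix r \<sigma> * D * perm_matrix r (inv_into UNIV \<sigma>))"
  then have ij: "i < r" "j < r" by (simp_all add: perm_matrix_def)
  have inv_lt: "inv_into UNIV \<sigma> l < r" if "l < r" for l
    using permutes_in_image[OF permutes_inv[OF \<sigma>]] that by simp
  have "(perm_matrix r \<sigma> * D * perm_matrix r (inv_into UNIV \<sigma>)) $$ (i, j) =
      (perm_matrix r \<sigma> * D) $$ (i, inv_into UNIV \<sigma> j)"
    by (rule index_mult_perm_matrix[OF permutes_inv[OF \<sigma>]]) (use D ij in \<open>auto simp: perm_matrix_def\<close>)
  also have "\<dots> = D $$ (inv_into UNIV \<sigma> i, inv_into UNIV \<sigma> j)"
    by (rule index_perm_matrix_mult[OF \<sigma> D ij(1) inv_lt[OF ij(2)]])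
  also have "\<dots> = M $$ (i, j)"
    using MD[OF inv_lt inv_lt] ij by (simp add: permutes_inverses(1)[OF \<sigma>])
  finally show "M $$ (i, j) = (perm_matrix r \<sigma> * D * perm_matrix r (inv_into UNIV \<sigma>)) $$ (i, j)" ..
qed (use M in auto)

lemma diag_block_mat_concat_carrier:
  assumes "\<And>i. i \<in> set ks \<Longrightarrow> F i \<in> carrier_mat (length (L i)) (length (L i))"
  shows "diag_block_mat (map F ks) \<in> carrier_mat (length (concat (map L ks))) (length (concat (map L ks)))"
  using assms by (induction ks) (auto simp: Let_def)

lemma index_diag_block_mat_concat:
  assumes "\<And>i. i \<in> set ks \<Longrightarrow> F i \<in> carrier_mat (length (L i)) (length (L i))"
    and "\<And>i j x y. i \<in> set ks \<Longrightarrow> j \<in> set ks \<Longrightarrow> x < length (L i) \<Longrightarrow> y < length (L j) \<Longrightarrow>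
      f (L i ! x) (L j ! y) = (if i = j then F i $$ (x, y) else 0)"
    and "distinct ks"
    and "p < length (concat (map L ks))" "q < length (concat (map L ks))"
  shows "diag_block_mat (map F ks) $$ (p, q) = f (concat (map L ks) ! p) (concat (map L ks) ! q)"
  using assms
proof (induction ks arbitrary: p q)
  case (Cons i ks)
  let ?D = "diag_block_mat (map F ks)" and ?Ls = "concat (map L ks)"
  have Fi: "F i \<in> carrier_mat (length (L i)) (length (L i))" using Cons.prems(1) by simp
  have D: "?D \<in> carrier_mat (length ?Ls) (length ?Ls)"
    using Cons.prems(1) by (intro diag_block_mat_concat_carrier) auto
  show ?case
  proof (cases "p < length (L i)"; cases "q < length (L i)")
    assume "p < length (L i)" "q < length (L i)"
    then show ?thesis using Fi D Cons.prems(2)[of i i p q] by (simp add: Let_def nth_append)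
  next
    assume p: "p < length (L i)" and q: "\<not> q < length (L i)"
    have "q - length (L i) < length ?Ls" using q Cons.prems(5) by simp
    then obtain j y where "j \<in> set ks" "y < length (L j)" "?Ls ! (q - length (L i)) = L j ! y"
      by (rule nth_concat_map_obtain)
    then show ?thesis using p q Fi D Cons.prems(2)[of i j p y] Cons.prems(3,5)
      by (auto simp: Let_def nth_append)
  next
    assume p: "\<not> p < length (L i)" and q: "q < length (L i)"
    have "p - length (L i) < length ?Ls" using p Cons.prems(4) by simp
    then obtain j x where "j \<in> set ks" "x < length (L j)" "?Ls ! (p - length (L i)) = L j ! x"
      by (rule nth_concat_map_obtain)
    then show ?thesis using p q Fi D Cons.prems(2)[of j i x q] Cons.prems(3,4)
      by (auto simp: Let_def nth_append)
  next
    assume p: "\<not> p < length (L i)" and q: "\<not> q < length (L i)"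
    have "?D $$ (p - length (L i), q - length (L i)) = f (?Ls ! (p - length (L i))) (?Ls ! (q - length (L i)))"
      using Cons.prems p q by (intro Cons.IH) auto
    then show ?thesis using p q Fi D Cons.prems(4,5) by (simp add: Let_def nth_append)
  qed
qed simp

lemma kron_carrier: "X \<in> carrier_mat a a' \<Longrightarrow> Y \<in> carrier_mat b b' \<Longrightarrow> kron X Y \<in> carrier_mat (a * b) (a' * b')"
  by (simp add: kron_def)

lemma index_kron:
  assumes "X \<in> carrier_mat a a'" "Y \<in> carrier_mat b b'" "x < a * b" "y < a' * b'"
  shows "kron X Y $$ (x, y) = X $$ (x div b, y div b') * Y $$ (x mod b, y mod b')"
  using assms by (simp add: kron_def)

lemma kron_sum_carrier:
  "X \<in> carrier_mat a a \<Longrightarrow> Y \<in> carrier_mat b b \<Longrightarrow> kron_sum X Y \<in> carrier_mat (a * b) (a * b)"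
  by (simp add: kron_sum_def kron_carrier)

lemma index_kron_sum:
  assumes X: "X \<in> carrier_mat a a" and Y: "Y \<in> carrier_mat b b" and xy: "x < a * b" "y < a * b"
  shows "kron_sum X Y $$ (x, y) =
    X $$ (x div b, y div b) * (if x mod b = y mod b then 1 else 0) +
    (if x div b = y div b then 1 else 0) * Y $$ (x mod b, y mod b)"
proof -
  have "0 < b" using xy by (cases b) auto
  then have "x div b < a" "y div b < a" "x mod b < b" "y mod b < b"
    using xy by (auto simp: less_mult_imp_div_less)
  moreover have "kron X (1\<^sub>m b) \<in> carrier_mat (a * b) (a * b)" "kron (1\<^sub>m a) Y \<in> carrier_mat (a * b) (a * b)"
    using X Y by (auto intro: kron_carrier)
  ultimately show ?thesis
    using X Y xy by (simp add: kron_sum_def index_kron[OF X one_carrier_mat] index_kron[OF one_carrier_mat Y])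
qed

section \<open>Splitting index tuples between the two diagonal blocks\<close>

text \<open>Ordered like the rows of \<open>A^(j) \<otimes> B^(i)\<close>: the \<open>A\<close>-part selects the row of
  \<open>A^(j)\<close>, the \<open>B\<close>-part (shifted by \<open>n\<close>) the row of \<open>B^(i)\<close>.\<close>

definition split_tuples :: "nat \<Rightarrow> nat \<Rightarrow> nat \<Rightarrow> nat \<Rightarrow> nat list list" where
  "split_tuples n m j i =
     concat (map (\<lambda>a. map (\<lambda>b. a @ map ((+) n) b) (inc_tuples i [0..<m])) (inc_tuples j [0..<n]))"

text \<open>The subtraction \<open>k - n\<close> truncates at 0, so the blocks run over
  \<open>i = max 0 (k - n), \<dots>, min m k\<close>.\<close>

definition block_order :: "nat \<Rightarrow> nat \<Rightarrow> nat \<Rightarrow> nat list list" where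
  "block_order n m k = concat (map (\<lambda>i. split_tuples n m (k - i) i) [k - n..<Suc (min m k)])"

lemma length_split_tuples: "length (split_tuples n m j i) = (n choose j) * (m choose i)"
  by (simp add: split_tuples_def length_concat_map_map length_inc_tuples)

lemma nth_split_tuples:
  assumes "x < (n choose j) * (m choose i)"
  shows "split_tuples n m j i ! x =
    inc_tuples j [0..<n] ! (x div (m choose i)) @ map ((+) n) (inc_tuples i [0..<m] ! (x mod (m choose i)))"
  using assms by (simp add: split_tuples_def nth_concat_map_map length_inc_tuples)

lemma mem_split_tuples:
  "ys \<in> set (split_tuples n m j i) \<longleftrightarrow>
    (\<exists>a b. ys = a @ map ((+) n) b \<and> a \<in> set (inc_tuples j [0..<n]) \<and> b \<in> set (inc_tuples i [0..<m]))"
  by (auto simp: split_tuples_def)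

lemma distinct_split_tuples: "distinct (split_tuples n m j i)"
  unfolding split_tuples_def
proof (rule distinct_concat_map)
  show "distinct (inc_tuples j [0..<n])" by (simp add: distinct_inc_tuples)
  show "distinct (map (\<lambda>b. a @ map ((+) n) b) (inc_tuples i [0..<m]))" for a
    by (simp add: distinct_map distinct_inc_tuples inj_on_def)
  fix a a' assume "a \<in> set (inc_tuples j [0..<n])" "a' \<in> set (inc_tuples j [0..<n])" "a \<noteq> a'"
  then show "set (map (\<lambda>b. a @ map ((+) n) b) (inc_tuples i [0..<m])) \<inter>
      set (map (\<lambda>b. a' @ map ((+) n) b) (inc_tuples i [0..<m])) = {}"
    by (auto simp: mem_inc_tuples_upt)
qed

lemma length_filter_less_split_tuples:
  assumes "ys \<in> set (split_tuples n m j i)"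
  shows "length (filter (\<lambda>y. y < n) ys) = j"
proof -
  obtain a b where "ys = a @ map ((+) n) b" "a \<in> set (inc_tuples j [0..<n])"
    using assms mem_split_tuples by blast
  moreover have "filter (\<lambda>y. y < n) (map ((+) n) b) = []" by (auto simp: filter_empty_conv)
  ultimately show ?thesis by (auto simp: mem_inc_tuples_upt filter_id_conv subset_iff)
qed

lemma distinct_block_order: "distinct (block_order n m k)"
  unfolding block_order_def
proof (rule distinct_concat_map)
  fix i i' assume "i \<in> set [k - n..<Suc (min m k)]" "i' \<in> set [k - n..<Suc (min m k)]" "i \<noteq> i'"
  then have "k - i \<noteq> k - i'" by auto
  then show "set (split_tuples n m (k - i) i) \<inter> set (split_tuples n m (k - i') i') = {}"
    using length_filter_less_split_tuples by (metis disjoint_iff)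
qed (simp_all add: distinct_split_tuples)

lemma sorted_wrt_less_length_le:
  fixes xs :: "nat list"
  assumes "sorted_wrt (<) xs" "set xs \<subseteq> {..<N}"
  shows "length xs \<le> N"
proof -
  have "length xs = card (set xs)" using assms(1) by (simp add: strict_sorted_iff distinct_card)
  also have "\<dots> \<le> N" using assms(2) by (metis card_lessThan card_mono finite_lessThan)
  finally show ?thesis .
qed

lemma inc_tuples_split:
  assumes "ys \<in> set (inc_tuples k [0..<n + m])"
  obtains i where "k - n \<le> i" "i \<le> min m k" "ys \<in> set (split_tuples n m (k - i) i)"
proof -
  have ys: "sorted_wrt (<) ys" "length ys = k" "set ys \<subseteq> {..<n + m}"
    using assms by (simp_all add: mem_inc_tuples_upt)
  define a where "a = filter (\<lambda>y. y < n) ys"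
  define b where "b = map (\<lambda>y. y - n) (filter (\<lambda>y. \<not> y < n) ys)"
  have high: "map ((+) n) b = filter (\<lambda>y. \<not> y < n) ys"
    unfolding b_def map_map by (rule map_idI) auto
  have ys_eq: "ys = a @ map ((+) n) b"
    unfolding a_def high using filter_less_append_filter_not_less[of ys n] ys(1)
    by (simp add: strict_sorted_iff)
  have a: "sorted_wrt (<) a" "set a \<subseteq> {..<n}"
    using ys(1) by (auto simp: a_def sorted_wrt_filter)
  have "sorted_wrt (<) (map ((+) n) b)" unfolding high using ys(1) by (simp add: sorted_wrt_filter)
  then have b: "sorted_wrt (<) b" "set b \<subseteq> {..<m}"
    using ys(3) by (auto simp: sorted_wrt_map b_def)
  have len: "length a + length b = k" using ys(2) unfolding ys_eq by simp
  show ?thesis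
  proof
    show "k - n \<le> length b" "length b \<le> min m k"
      using len sorted_wrt_less_length_le[OF a] sorted_wrt_less_length_le[OF b] by auto
    show "ys \<in> set (split_tuples n m (k - length b) (length b))"
      unfolding mem_split_tuples mem_inc_tuples_upt ys_eq
      by (intro exI[of _ a] exI[of _ b]) (use a b len in auto)
  qed
qed

lemma set_block_order: "set (block_order n m k) = set (inc_tuples k [0..<n + m])"
proof (intro Set.set_eqI iffI)
  fix ys assume "ys \<in> set (block_order n m k)"
  then obtain i where i: "k - n \<le> i" "i \<le> min m k" and "ys \<in> set (split_tuples n m (k - i) i)"
    by (auto simp: block_order_def less_Suc_eq_le simp del: upt_Suc)
  then obtain a b where ys: "ys = a @ map ((+) n) b"
    and a: "a \<in> set (inc_tuples (k - i) [0..<n])" and b: "b \<in> set (inc_tuples i [0..<m])"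
    by (auto simp: mem_split_tuples)
  have "sorted_wrt (<) ys" using a b unfolding ys
    by (auto simp: mem_inc_tuples_upt sorted_wrt_append sorted_wrt_map subset_iff intro: less_le_trans)
  moreover have "length ys = k" and "set ys \<subseteq> {..<n + m}"
    using a b i unfolding ys by (auto simp: mem_inc_tuples_upt)
  ultimately show "ys \<in> set (inc_tuples k [0..<n + m])" by (simp add: mem_inc_tuples_upt)
next
  fix ys assume "ys \<in> set (inc_tuples k [0..<n + m])"
  then obtain i where "k - n \<le> i" "i \<le> min m k" "ys \<in> set (split_tuples n m (k - i) i)"
    by (rule inc_tuples_split)
  then show "ys \<in> set (block_order n m k)"
    by (auto simp: block_order_def less_Suc_eq_le simp del: upt_Suc)
qed

lemma mset_block_order: "mset (block_order n m k) = mset (inc_tuples k [0..<n + m])"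
  using set_block_order distinct_block_order distinct_inc_tuples[of "[0..<n + m]" k]
  by (metis set_eq_iff_mset_eq_distinct sorted_wrt_upt)

lemma block_order_permutation:
  obtains \<sigma> where "\<sigma> permutes {..<(n + m) choose k}"
    and "\<And>p. p < (n + m) choose k \<Longrightarrow> inc_tuples k [0..<n + m] ! \<sigma> p = block_order n m k ! p"
proof -
  obtain \<sigma> where \<sigma>: "\<sigma> permutes {..<length (inc_tuples k [0..<n + m])}"
    and eq: "permute_list \<sigma> (inc_tuples k [0..<n + m]) = block_order n m k"
    using mset_eq_permutation[OF mset_block_order] by blast
  show ?thesis
  proof
    show "\<sigma> permutes {..<(n + m) choose k}" using \<sigma> by (simp add: length_inc_tuples)
    show "inc_tuples k [0..<n + m] ! \<sigma> p = block_order n m k ! p" if "p < (n + m) choose k" for p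
      using that \<sigma> permute_list_nth[OF \<sigma>, of p] by (simp add: eq length_inc_tuples)
  qed
qed

lemma length_block_order: "length (block_order n m k) = (n + m) choose k"
  using mset_block_order[of n m k] by (metis size_mset length_inc_tuples length_upt diff_zero)

section \<open>Matrix exponential and additive compounds\<close>

lemma mat_exp_carrier: "mat_exp t M \<in> carrier_mat (dim_row M) (dim_col M)"
  by (simp add: mat_exp_def)

lemma index_mat_exp:
  "i < dim_row M \<Longrightarrow> j < dim_col M \<Longrightarrow> mat_exp t M $$ (i, j) = (\<Sum>l. (t ^ l / fact l) * (M ^\<^sub>m l) $$ (i, j))"
  by (simp add: mat_exp_def)

lemma mat_exp_zero:
  assumes "M \<in> carrier_mat n n"
  shows "mat_exp 0 M = 1\<^sub>m n"
proof (rule eq_matI)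
  fix i j assume "i < dim_row (1\<^sub>m n)" "j < dim_col (1\<^sub>m n)"
  then have ij: "i < n" "j < n" by auto
  have "mat_exp 0 M $$ (i, j) = (\<Sum>l. ((M ^\<^sub>m l) $$ (i, j) / fact l) * 0 ^ l)"
    using ij assms by (simp add: index_mat_exp mult.commute)
  also have "\<dots> = 1\<^sub>m n $$ (i, j)" using ij assms by (subst powser_zero) auto
  finally show "mat_exp 0 M $$ (i, j) = 1\<^sub>m n $$ (i, j)" .
qed (use assms mat_exp_carrier[of 0 M] in auto)

lemma four_block_diag_pow:
  assumes "A \<in> carrier_mat n n" "B \<in> carrier_mat m m"
  shows "four_block_mat A (0\<^sub>m n m) (0\<^sub>m m n) B ^\<^sub>m l =
    four_block_mat (A ^\<^sub>m l) (0\<^sub>m n m) (0\<^sub>m m n) (B ^\<^sub>m l)"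
proof -
  have diag: "four_block_mat X (0\<^sub>m n m) (0\<^sub>m m n) Y = diag_block_mat [X, Y]"
    if "X \<in> carrier_mat n n" "Y \<in> carrier_mat m m" for X Y :: "'a mat"
    unfolding diag_block_mat.simps(2)[of X "[Y]"] diag_block_mat_singleton Let_def using that by simp
  have pow: "A ^\<^sub>m l \<in> carrier_mat n n" "B ^\<^sub>m l \<in> carrier_mat m m" using assms by auto
  have "diag_block_mat [A, B] ^\<^sub>m l = diag_block_mat [A ^\<^sub>m l, B ^\<^sub>m l]"
    using diag_block_pow_mat[of "[A, B]" l] assms by (simp del: diag_block_mat.simps)
  then show ?thesis unfolding diag[OF assms] diag[OF pow] .
qed

lemma mat_exp_four_block_diag:
  assumes A: "A \<in> carrier_mat n n" and B: "B \<in> carrier_mat m m"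
  shows "mat_exp t (four_block_mat A (0\<^sub>m n m) (0\<^sub>m m n) B) =
    four_block_mat (mat_exp t A) (0\<^sub>m n m) (0\<^sub>m m n) (mat_exp t B)"
proof (rule eq_matI)
  have EA: "mat_exp t A \<in> carrier_mat n n" and EB: "mat_exp t B \<in> carrier_mat m m"
    using A B mat_exp_carrier[of t A] mat_exp_carrier[of t B] by auto
  fix i j
  assume "i < dim_row (four_block_mat (mat_exp t A) (0\<^sub>m n m) (0\<^sub>m m n) (mat_exp t B))"
    "j < dim_col (four_block_mat (mat_exp t A) (0\<^sub>m n m) (0\<^sub>m m n) (mat_exp t B))"
  then have ij: "i < n + m" "j < n + m" using EA EB by auto
  have "four_block_mat (A ^\<^sub>m l) (0\<^sub>m n m) (0\<^sub>m m n) (B ^\<^sub>m l) $$ (i, j) =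
    (if i < n then if j < n then (A ^\<^sub>m l) $$ (i, j) else 0
     else if j < n then 0 else (B ^\<^sub>m l) $$ (i - n, j - n))" for l
    using ij A B by (subst index_mat_four_block) (auto simp: pow_mat_dim_square[OF A] pow_mat_dim_square[OF B])
  moreover have "four_block_mat (mat_exp t A) (0\<^sub>m n m) (0\<^sub>m m n) (mat_exp t B) $$ (i, j) =
    (if i < n then if j < n then mat_exp t A $$ (i, j) else 0
     else if j < n then 0 else mat_exp t B $$ (i - n, j - n))"
    using ij EA EB by (subst index_mat_four_block) auto
  ultimately show "mat_exp t (four_block_mat A (0\<^sub>m n m) (0\<^sub>m m n) B) $$ (i, j) =
    four_block_mat (mat_exp t A) (0\<^sub>m n m) (0\<^sub>m m n) (mat_exp t B) $$ (i, j)"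
    using ij A B by (cases "i < n"; cases "j < n") (simp_all add: index_mat_exp four_block_diag_pow)
qed (use A B mat_exp_carrier[of t A] mat_exp_carrier[of t B]
       mat_exp_carrier[of t "four_block_mat A (0\<^sub>m n m) (0\<^sub>m m n) B"] in auto)

lemma abs_index_pow_mat_le:
  fixes M :: "real mat"
  assumes M: "M \<in> carrier_mat n n" and ab: "a < n" "b < n"
  shows "\<bar>(M ^\<^sub>m l) $$ (a, b)\<bar> \<le> (\<Sum>a'<n. \<Sum>b'<n. \<bar>M $$ (a', b')\<bar>) ^ l"
  using ab
proof (induction l arbitrary: b)
  case 0
  then show ?case using M by simp
next
  case (Suc l)
  let ?K = "\<Sum>a'<n. \<Sum>b'<n. \<bar>M $$ (a', b')\<bar>"
  have "\<bar>(M ^\<^sub>m Suc l) $$ (a, b)\<bar> = \<bar>\<Sum>c<n. (M ^\<^sub>m l) $$ (a, c) * M $$ (c, b)\<bar>"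
    using M Suc.prems ab by (simp add: scalar_prod_def atLeast0LessThan)
  also have "\<dots> \<le> (\<Sum>c<n. \<bar>(M ^\<^sub>m l) $$ (a, c)\<bar> * \<bar>M $$ (c, b)\<bar>)"
    by (rule order.trans[OF sum_abs]) (simp add: abs_mult)
  also have "\<dots> \<le> (\<Sum>c<n. ?K ^ l * \<bar>M $$ (c, b)\<bar>)"
    using Suc.IH ab(1) by (intro sum_mono mult_right_mono) auto
  also have "\<dots> = ?K ^ l * (\<Sum>c<n. \<bar>M $$ (c, b)\<bar>)" by (simp add: sum_distrib_left)
  also have "\<dots> \<le> ?K ^ l * ?K"
    using Suc.prems by (intro mult_left_mono sum_mono zero_le_power sum_nonneg)
      (auto intro: member_le_sum)
  finally show ?case by (simp add: mult.commute)
qed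

lemma index_mat_exp_field_differentiable:
  fixes M :: "real mat"
  assumes M: "M \<in> carrier_mat n n" and ab: "a < n" "b < n"
  shows "(\<lambda>t. mat_exp t M $$ (a, b)) field_differentiable (at t0)"
proof -
  define K where "K = (\<Sum>a'<n. \<Sum>b'<n. \<bar>M $$ (a', b')\<bar>)"
  define c where "c l = (M ^\<^sub>m l) $$ (a, b) / fact l" for l
  have eq: "(\<lambda>t. mat_exp t M $$ (a, b)) = (\<lambda>t. \<Sum>l. c l * t ^ l)"
    using M ab by (auto simp: index_mat_exp c_def mult.commute)
  have "summable (\<lambda>l. c l * y ^ l)" for y :: real
  proof (rule summable_comparison_test)
    show "summable (\<lambda>l. inverse (fact l) * (K * \<bar>y\<bar>) ^ l)" by (rule summable_exp)
    have "norm (c l * y ^ l) \<le> inverse (fact l) * (K * \<bar>y\<bar>) ^ l" for l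
      using abs_index_pow_mat_le[OF M ab, of l]
      by (simp add: c_def K_def abs_mult power_abs divide_simps mult_right_mono)
    then show "\<exists>N. \<forall>l\<ge>N. norm (c l * y ^ l) \<le> inverse (fact l) * (K * \<bar>y\<bar>) ^ l" by blast
  qed
  then show ?thesis unfolding eq field_differentiable_def
    using termdiffs_strong_converges_everywhere by blast
qed

lemma field_differentiable_prod:
  fixes f :: "'b \<Rightarrow> 'a \<Rightarrow> 'a::real_normed_field"
  shows "(\<And>i. i \<in> I \<Longrightarrow> f i field_differentiable (at t0 within S)) \<Longrightarrow>
    (\<lambda>t. \<Prod>i\<in>I. f i t) field_differentiable (at t0 within S)"
  by (induction I rule: infinite_finite_induct) (auto intro: field_differentiable_mult)

lemma field_differentiable_det:
  fixes F :: "real \<Rightarrow> real mat"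
  assumes F: "\<And>t. F t \<in> carrier_mat k k"
    and dF: "\<And>u v. u < k \<Longrightarrow> v < k \<Longrightarrow> (\<lambda>t. F t $$ (u, v)) field_differentiable (at t0 within S)"
  shows "(\<lambda>t. det (F t)) field_differentiable (at t0 within S)"
proof -
  have det: "(\<lambda>t. det (F t)) = (\<lambda>t. \<Sum>p\<in>{p. p permutes {0..<k}}. signof p * (\<Prod>u = 0..<k. F t $$ (u, p u)))"
    by (rule ext) (rule det_def'[OF F])
  show ?thesis unfolding det
  proof (intro field_differentiable_sum field_differentiable_mult field_differentiable_const
      field_differentiable_prod)
    fix p u assume "p \<in> {p. p permutes {0..<k}}" "u \<in> {0..<k}"
    then show "(\<lambda>t. F t $$ (u, p u)) field_differentiable (at t0 within S)"
      by (intro dF) (auto dest: permutes_in_image)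
  qed
qed

lemma index_mult_compound_mat_exp_field_differentiable:
  fixes M :: "real mat"
  assumes M: "M \<in> carrier_mat n n" and xy: "x < n choose k" "y < n choose k"
  shows "(\<lambda>t. mult_compound k (mat_exp t M) $$ (x, y)) field_differentiable (at t0)"
proof -
  let ?I = "inc_tuples k [0..<n] ! x" and ?J = "inc_tuples k [0..<n] ! y"
  note I = nth_inc_tuples_upt[OF xy(1)] and J = nth_inc_tuples_upt[OF xy(2)]
  have dims: "dim_row (mat_exp t M) = n" "dim_col (mat_exp t M) = n" for t
    using M mat_exp_carrier[of t M] by auto
  have eq: "(\<lambda>t. mult_compound k (mat_exp t M) $$ (x, y)) = (\<lambda>t. det (submat (mat_exp t M) ?I ?J))"
    using xy by (simp add: index_mult_compound dims)
  show ?thesis unfolding eq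
  proof (rule field_differentiable_det)
    show "submat (mat_exp t M) ?I ?J \<in> carrier_mat k k" for t
      using submat_carrier[of "mat_exp t M" ?I ?J] I(2) J(2) by simp
    fix u v assume "u < k" "v < k"
    then show "(\<lambda>t. submat (mat_exp t M) ?I ?J $$ (u, v)) field_differentiable at t0"
      using I J by (simp add: submat_def subset_iff index_mat_exp_field_differentiable[OF M])
  qed
qed

lemma add_compound_eq:
  assumes "M \<in> carrier_mat n n"
  shows "add_compound k M =
    mat (n choose k) (n choose k) (\<lambda>(x, y). deriv (\<lambda>t. mult_compound k (mat_exp t M) $$ (x, y)) 0)"
  using assms mult_compound_carrier[of k M] by (simp add: add_compound_def Let_def)

lemma add_compound_carrier: "M \<in> carrier_mat n n \<Longrightarrow> add_compound k M \<in> carrier_mat (n choose k) (n choose k)"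
  by (simp add: add_compound_eq)

lemma deriv_index_kron:
  fixes F G :: "real \<Rightarrow> real mat"
  assumes F: "\<And>t. F t \<in> carrier_mat a a" and G: "\<And>t. G t \<in> carrier_mat b b"
    and F0: "F 0 = 1\<^sub>m a" and G0: "G 0 = 1\<^sub>m b"
    and dF: "\<And>i j. i < a \<Longrightarrow> j < a \<Longrightarrow> (\<lambda>t. F t $$ (i, j)) field_differentiable (at 0)"
    and dG: "\<And>i j. i < b \<Longrightarrow> j < b \<Longrightarrow> (\<lambda>t. G t $$ (i, j)) field_differentiable (at 0)"
    and xy: "x < a * b" "y < a * b"
  shows "deriv (\<lambda>t. kron (F t) (G t) $$ (x, y)) 0 =
    kron_sum (mat a a (\<lambda>(i, j). deriv (\<lambda>t. F t $$ (i, j)) 0))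
      (mat b b (\<lambda>(i, j). deriv (\<lambda>t. G t $$ (i, j)) 0)) $$ (x, y)"
proof -
  have "0 < b" using xy by (cases b) auto
  then have d: "x div b < a" "y div b < a" and m: "x mod b < b" "y mod b < b"
    using xy by (auto simp: less_mult_imp_div_less)
  let ?f = "\<lambda>t. F t $$ (x div b, y div b)" and ?g = "\<lambda>t. G t $$ (x mod b, y mod b)"
  have "(\<lambda>t. kron (F t) (G t) $$ (x, y)) = (\<lambda>t. ?f t * ?g t)"
    by (intro ext index_kron[OF F G xy])
  then have "deriv (\<lambda>t. kron (F t) (G t) $$ (x, y)) 0 = ?f 0 * deriv ?g 0 + deriv ?f 0 * ?g 0"
    using deriv_mult[OF dF[OF d] dG[OF m]] by simp
  also have "\<dots> = kron_sum (mat a a (\<lambda>(i, j). deriv (\<lambda>t. F t $$ (i, j)) 0))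
      (mat b b (\<lambda>(i, j). deriv (\<lambda>t. G t $$ (i, j)) 0)) $$ (x, y)"
    using d m by (simp add: index_kron_sum[OF mat_carrier mat_carrier xy] F0 G0)
  finally show ?thesis .
qed

section \<open>Compounds of a block-diagonal matrix\<close>

lemma det_submat_split_tuples:
  fixes A B :: "real mat"
  assumes A: "A \<in> carrier_mat n n" and B: "B \<in> carrier_mat m m" and "i \<le> k" "i' \<le> k"
    and x: "x < (n choose (k - i)) * (m choose i)" and y: "y < (n choose (k - i')) * (m choose i')"
  shows "det (submat (four_block_mat A (0\<^sub>m n m) (0\<^sub>m m n) B)
      (split_tuples n m (k - i) i ! x) (split_tuples n m (k - i') i' ! y)) =
    (if i = i' then kron (mult_compound (k - i) A) (mult_compound i B) $$ (x, y) else 0)"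
proof -
  let ?q = "m choose i" and ?q' = "m choose i'"
  have "0 < ?q" "0 < ?q'" using x y by (metis mult_0_right not_less_zero gr0I)+
  then have x': "x div ?q < n choose (k - i)" "x mod ?q < ?q"
    and y': "y div ?q' < n choose (k - i')" "y mod ?q' < ?q'"
    using x y by (auto simp: less_mult_imp_div_less)
  have len: "(k - i) + i = (k - i') + i'" and eq_iff: "k - i = k - i' \<longleftrightarrow> i = i'"
    using assms(3,4) by auto
  note Ix = nth_inc_tuples_upt[OF x'(1)] and Jx = nth_inc_tuples_upt[OF x'(2)]
    and Iy = nth_inc_tuples_upt[OF y'(1)] and Jy = nth_inc_tuples_upt[OF y'(2)]
  have "det (submat (four_block_mat A (0\<^sub>m n m) (0\<^sub>m m n) B)
      (split_tuples n m (k - i) i ! x) (split_tuples n m (k - i') i' ! y)) =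
    (if i = i' then det (submat A (inc_tuples (k - i) [0..<n] ! (x div ?q)) (inc_tuples (k - i') [0..<n] ! (y div ?q')))
       * det (submat B (inc_tuples i [0..<m] ! (x mod ?q)) (inc_tuples i' [0..<m] ! (y mod ?q')))
     else 0)"
    unfolding nth_split_tuples[OF x] nth_split_tuples[OF y]
    using det_submat_four_block_diag[OF A B Ix(3) Iy(3) Jx(3) Jy(3)] Ix(2) Jx(2) Iy(2) Jy(2) len eq_iff
    by simp
  also have "\<dots> = (if i = i' then kron (mult_compound (k - i) A) (mult_compound i B) $$ (x, y) else 0)"
  proof (cases "i = i'")
    case True
    moreover have "mult_compound (k - i) A \<in> carrier_mat (n choose (k - i)) (n choose (k - i))"
      "mult_compound i B \<in> carrier_mat ?q ?q"
      using mult_compound_carrier[of "k - i" A] mult_compound_carrier[of i B] A B by auto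
    ultimately show ?thesis
      using True A B x y x' y' by (simp add: index_kron index_mult_compound)
  qed simp
  finally show ?thesis .
qed

lemma deriv_det_submat_split_tuples:
  fixes A B :: "real mat"
  assumes A: "A \<in> carrier_mat n n" and B: "B \<in> carrier_mat m m" and i: "i \<le> k" "i' \<le> k"
    and x: "x < (n choose (k - i)) * (m choose i)" and y: "y < (n choose (k - i')) * (m choose i')"
  shows "deriv (\<lambda>t. det (submat (mat_exp t (four_block_mat A (0\<^sub>m n m) (0\<^sub>m m n) B))
      (split_tuples n m (k - i) i ! x) (split_tuples n m (k - i') i' ! y))) 0 =
    (if i = i' then kron_sum (add_compound (k - i) A) (add_compound i B) $$ (x, y) else 0)"
proof -
  let ?F = "\<lambda>t. mult_compound (k - i) (mat_exp t A)" and ?G = "\<lambda>t. mult_compound i (mat_exp t B)"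
  have EA: "mat_exp t A \<in> carrier_mat n n" and EB: "mat_exp t B \<in> carrier_mat m m" for t
    using A B mat_exp_carrier[of t A] mat_exp_carrier[of t B] by auto
  have "(\<lambda>t. det (submat (mat_exp t (four_block_mat A (0\<^sub>m n m) (0\<^sub>m m n) B))
      (split_tuples n m (k - i) i ! x) (split_tuples n m (k - i') i' ! y))) =
    (\<lambda>t. if i = i' then kron (?F t) (?G t) $$ (x, y) else 0)"
    unfolding mat_exp_four_block_diag[OF A B] using det_submat_split_tuples[OF EA EB i x y] by simp
  moreover have "deriv (\<lambda>t. kron (?F t) (?G t) $$ (x, y)) 0 =
    kron_sum (add_compound (k - i) A) (add_compound i B) $$ (x, y)" if "i = i'"
  proof -
    have "deriv (\<lambda>t. kron (?F t) (?G t) $$ (x, y)) 0 =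
      kron_sum (mat (n choose (k - i)) (n choose (k - i)) (\<lambda>(u, v). deriv (\<lambda>t. ?F t $$ (u, v)) 0))
        (mat (m choose i) (m choose i) (\<lambda>(u, v). deriv (\<lambda>t. ?G t $$ (u, v)) 0)) $$ (x, y)"
    proof (rule deriv_index_kron)
      show "?F t \<in> carrier_mat (n choose (k - i)) (n choose (k - i))" for t
        by (rule mult_compound_carrier_square[OF EA])
      show "?G t \<in> carrier_mat (m choose i) (m choose i)" for t
        by (rule mult_compound_carrier_square[OF EB])
      show "?F 0 = 1\<^sub>m (n choose (k - i))" "?G 0 = 1\<^sub>m (m choose i)"
        by (simp_all add: mat_exp_zero[OF A] mat_exp_zero[OF B] mult_compound_one)
    qed (use x y that in \<open>auto intro: index_mult_compound_mat_exp_field_differentiable[OF A]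
        index_mult_compound_mat_exp_field_differentiable[OF B]\<close>)
    then show ?thesis by (simp add: add_compound_eq[OF A] add_compound_eq[OF B])
  qed
  ultimately show ?thesis by simp
qed

lemma diag_block_mat_blocks_carrier:
  assumes "\<And>i. F i \<in> carrier_mat ((n choose (k - i)) * (m choose i)) ((n choose (k - i)) * (m choose i))"
  shows "diag_block_mat (map F [k - n..<Suc (min m k)]) \<in> carrier_mat ((n + m) choose k) ((n + m) choose k)"
  using diag_block_mat_concat_carrier[of "[k - n..<Suc (min m k)]" F "\<lambda>i. split_tuples n m (k - i) i"]
    assms length_block_order[of n m k]
  by (simp add: length_split_tuples block_order_def del: upt_Suc)

context
  fixes n m k :: nat and \<sigma> :: "nat \<Rightarrow> nat"
  assumes \<sigma>: "\<sigma> permutes {..<(n + m) choose k}"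
    and \<sigma>_nth: "\<And>p. p < (n + m) choose k \<Longrightarrow> inc_tuples k [0..<n + m] ! \<sigma> p = block_order n m k ! p"
begin

lemma index_mult_compound_reindex:
  fixes M :: "real mat"
  assumes "M \<in> carrier_mat (n + m) (n + m)" and "p < (n + m) choose k" "q < (n + m) choose k"
  shows "mult_compound k M $$ (\<sigma> p, \<sigma> q) = det (submat M (block_order n m k ! p) (block_order n m k ! q))"
  using assms permutes_in_image[OF \<sigma>] by (simp add: index_mult_compound \<sigma>_nth)

lemma index_mult_compound_four_block_diag:
  fixes A B :: "real mat"
  assumes A: "A \<in> carrier_mat n n" and B: "B \<in> carrier_mat m m"
    and pq: "p < (n + m) choose k" "q < (n + m) choose k"
  shows "mult_compound k (four_block_mat A (0\<^sub>m n m) (0\<^sub>m m n) B) $$ (\<sigma> p, \<sigma> q) =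
    diag_block_mat (map (\<lambda>i. kron (mult_compound (k - i) A) (mult_compound i B)) [k - n..<Suc (min m k)]) $$ (p, q)"
proof -
  let ?C = "four_block_mat A (0\<^sub>m n m) (0\<^sub>m m n) B"
  have "mult_compound k ?C $$ (\<sigma> p, \<sigma> q) = det (submat ?C (block_order n m k ! p) (block_order n m k ! q))"
    using A B pq by (simp add: index_mult_compound_reindex)
  also have "\<dots> = diag_block_mat (map (\<lambda>i. kron (mult_compound (k - i) A) (mult_compound i B)) [k - n..<Suc (min m k)]) $$ (p, q)"
    unfolding block_order_def
  proof (rule index_diag_block_mat_concat[symmetric])
    show "kron (mult_compound (k - i) A) (mult_compound i B) \<in>
        carrier_mat (length (split_tuples n m (k - i) i)) (length (split_tuples n m (k - i) i))" for i
      using A B mult_compound_carrier[of "k - i" A] mult_compound_carrier[of i B]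
      by (simp add: length_split_tuples kron_carrier)
    show "det (submat ?C (split_tuples n m (k - i) i ! x) (split_tuples n m (k - i') i' ! y)) =
        (if i = i' then kron (mult_compound (k - i) A) (mult_compound i B) $$ (x, y) else 0)"
      if "i \<in> set [k - n..<Suc (min m k)]" "i' \<in> set [k - n..<Suc (min m k)]"
        "x < length (split_tuples n m (k - i) i)" "y < length (split_tuples n m (k - i') i')" for i i' x y
      using that by (intro det_submat_split_tuples[OF A B]) (auto simp: length_split_tuples)
  qed (use pq length_block_order[of n m k] in \<open>simp_all add: block_order_def\<close>)
  finally show ?thesis .
qed

lemma index_add_compound_four_block_diag:
  fixes A B :: "real mat"
  assumes A: "A \<in> carrier_mat n n" and B: "B \<in> carrier_mat m m"
    and pq: "p < (n + m) choose k" "q < (n + m) choose k"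
  shows "add_compound k (four_block_mat A (0\<^sub>m n m) (0\<^sub>m m n) B) $$ (\<sigma> p, \<sigma> q) =
    diag_block_mat (map (\<lambda>i. kron_sum (add_compound (k - i) A) (add_compound i B)) [k - n..<Suc (min m k)]) $$ (p, q)"
proof -
  let ?C = "four_block_mat A (0\<^sub>m n m) (0\<^sub>m m n) B"
  have C: "?C \<in> carrier_mat (n + m) (n + m)" and EC: "mat_exp t ?C \<in> carrier_mat (n + m) (n + m)" for t
    using A B mat_exp_carrier[of t ?C] by auto
  have "add_compound k ?C $$ (\<sigma> p, \<sigma> q) = deriv (\<lambda>t. mult_compound k (mat_exp t ?C) $$ (\<sigma> p, \<sigma> q)) 0"
    using pq permutes_in_image[OF \<sigma>] by (simp add: add_compound_eq[OF C])
  also have "\<dots> = deriv (\<lambda>t. det (submat (mat_exp t ?C) (block_order n m k ! p) (block_order n m k ! q))) 0"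
    using pq EC by (simp add: index_mult_compound_reindex)
  also have "\<dots> = diag_block_mat (map (\<lambda>i. kron_sum (add_compound (k - i) A) (add_compound i B)) [k - n..<Suc (min m k)]) $$ (p, q)"
    unfolding block_order_def
  proof (rule index_diag_block_mat_concat[symmetric])
    show "kron_sum (add_compound (k - i) A) (add_compound i B) \<in>
        carrier_mat (length (split_tuples n m (k - i) i)) (length (split_tuples n m (k - i) i))" for i
      using add_compound_carrier[OF A, of "k - i"] add_compound_carrier[OF B, of i]
      by (simp add: length_split_tuples kron_sum_carrier)
    show "deriv (\<lambda>t. det (submat (mat_exp t ?C) (split_tuples n m (k - i) i ! x) (split_tuples n m (k - i') i' ! y))) 0 =
        (if i = i' then kron_sum (add_compound (k - i) A) (add_compound i B) $$ (x, y) else 0)"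
      if "i \<in> set [k - n..<Suc (min m k)]" "i' \<in> set [k - n..<Suc (min m k)]"
        "x < length (split_tuples n m (k - i) i)" "y < length (split_tuples n m (k - i') i')" for i i' x y
      using that by (intro deriv_det_submat_split_tuples[OF A B]) (auto simp: length_split_tuples)
  qed (use pq length_block_order[of n m k] in \<open>simp_all add: block_order_def\<close>)
  finally show ?thesis .
qed

lemma mult_compound_four_block_diag:
  fixes A B :: "real mat"
  assumes A: "A \<in> carrier_mat n n" and B: "B \<in> carrier_mat m m"
  shows "mult_compound k (four_block_mat A (0\<^sub>m n m) (0\<^sub>m m n) B) =
    perm_matrix ((n + m) choose k) \<sigma> *
    diag_block_mat (map (\<lambda>i. kron (mult_compound (k - i) A) (mult_compound i B)) [k - n..<Suc (min m k)]) *
    perm_matrix ((n + m) choose k) (inv_into UNIV \<sigma>)"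
  using A B by (intro perm_matrix_conjugate[OF \<sigma>] diag_block_mat_blocks_carrier kron_carrier
      mult_compound_carrier_square index_mult_compound_four_block_diag) auto

lemma add_compound_four_block_diag:
  fixes A B :: "real mat"
  assumes A: "A \<in> carrier_mat n n" and B: "B \<in> carrier_mat m m"
  shows "add_compound k (four_block_mat A (0\<^sub>m n m) (0\<^sub>m m n) B) =
    perm_matrix ((n + m) choose k) \<sigma> *
    diag_block_mat (map (\<lambda>i. kron_sum (add_compound (k - i) A) (add_compound i B)) [k - n..<Suc (min m k)]) *
    perm_matrix ((n + m) choose k) (inv_into UNIV \<sigma>)"
  using A B by (intro perm_matrix_conjugate[OF \<sigma>] diag_block_mat_blocks_carrier kron_sum_carrier
      add_compound_carrier index_add_compound_four_block_diag) auto

end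

lemma map_nat_upto_eq_upt:
  "map nat [max 0 (int k - int n)..min (int m) (int k)] = [k - n..<Suc (min m k)]"
proof (rule nth_equalityI)
  fix i assume "i < length (map nat [max 0 (int k - int n)..min (int m) (int k)])"
  then have "max 0 (int k - int n) + int i \<le> min (int m) (int k)"
    by (simp add: zless_nat_eq_int_zless; arith)
  then show "map nat [max 0 (int k - int n)..min (int m) (int k)] ! i = [k - n..<Suc (min m k)] ! i"
    by (cases "n \<le> k") (auto simp del: upt_Suc)
qed auto

theorem theorem3:
  fixes A B :: "real mat" and n m k :: nat
  assumes "A \<in> carrier_mat n n" and "B \<in> carrier_mat m m"
    and "1 \<le> k" and "k \<le> n + m"
  shows "let C = four_block_mat A (0\<^sub>m n m) (0\<^sub>m m n) B;
             r = (n + m) choose k;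
             i1 = max 0 (int k - int n); i2 = min (int m) (int k);
             idx = map nat [i1..i2]
         in \<exists>P Pinv. perm_mat r P \<and> Pinv \<in> carrier_mat r r \<and>
              P * Pinv = 1\<^sub>m r \<and> Pinv * P = 1\<^sub>m r \<and>
              mult_compound k C =
                P * diag_block_mat (map (\<lambda>i. kron (mult_compound (k - i) A) (mult_compound i B)) idx) * Pinv \<and>
              add_compound k C =
                P * diag_block_mat (map (\<lambda>i. kron_sum (add_compound (k - i) A) (add_compound i B)) idx) * Pinv"
proof -
  obtain \<sigma> where \<sigma>: "\<sigma> permutes {..<(n + m) choose k}"
    and \<sigma>_nth: "\<And>p. p < (n + m) choose k \<Longrightarrow> inc_tuples k [0..<n + m] ! \<sigma> p = block_order n m k ! p"
    using block_order_permutation[of n m k] by blast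
  have "perm_mat ((n + m) choose k) (perm_matrix ((n + m) choose k) \<sigma>)"
    using \<sigma> by (auto simp: perm_mat_def perm_matrix_def)
  then show ?thesis
    unfolding Let_def map_nat_upto_eq_upt
    using mult_compound_four_block_diag[OF \<sigma> \<sigma>_nth assms(1,2)] add_compound_four_block_diag[OF \<sigma> \<sigma>_nth assms(1,2)]
      perm_matrix_mult_inv[OF \<sigma>] perm_matrix_carrier by blast
qed

end
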